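(* Let $P:\mathcal C^{op}\to\mathbf{Pos}$ be a doctrine and $\mathsf K=(K,\kappa,\mu,\nu)$ a comonad on $P$ in $\mathbf{IdxPos}$ (so $(K,\mu,\nu)$ is a comonad on $\mathcal C$, $\kappa:P\Rightarrow PK^{op}$ is natural, and $\kappa_X\le P(\mu_X)\circ\kappa_{KX}\circ\kappa_X$, $\kappa_X\le P(\nu_X)$). Let $\mathcal C_K$ be the category of $K$-coalgebras $(C,c)$, $c:C\to KC$, with coalgebra morphisms, and let $P^{\mathsf K}:\mathcal C_K^{op}\to\mathbf{Pos}$ be the doctrine with $P^{\mathsf K}(C,c)=\{\alpha\in PC\mid\alpha\le P(c)(\kappa_C(\alpha))\}$ (suborder of $PC$) and reindexing along a coalgebra morphism $t$ given by the restriction of $P(t)$. Let $(U,u):P^{\mathsf K}\to P$ be the 1-arrow with $U:\mathcal C_K\to\mathcal C$ the forgetful functor and $u_{(C,c)}:P^{\mathsf K}(C,c)\hookrightarrow PC$ the inclusion, and let $\omega:(U,u)\Rightarrow(K,\kappa)\circ(U,u)$ be the 2-arrow with $\omega_{(C,c)}=c$. Then $(P^{\mathsf K},(U,u),\omega)$ is the Eilenberg-Moore construction for $\mathsf K$ in $\mathbf{IdxPos}$, namely: (a) for every doctrine $Q:\mathcal D^{op}\to\mathbf{Pos}$, every 1-arrow $(X,x):Q\to P$ and every 2-arrow $\xi:(X,x)\Rightarrow(K,\kappa)\circ(X,x)$ in $\mathbf{IdxPos}$ satisfying $(\mu X)\cdot\xi=(K\xi)\cdot\xi$ and $(\nu X)\cdot\xi=\mathrm{id}_X$,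 there is a unique 1-arrow $(X',x'):Q\to P^{\mathsf K}$ with $(U,u)\circ(X',x')=(X,x)$ and $\omega(X',x')=\xi$ (i.e. $\omega_{X'D}=\xi_D$ for all $D$); (b) for two such pairs $((X,x),\xi)$, $((Y,y),\zeta)$ with induced $(X',x'),(Y',y')$, and every 2-arrow $\gamma:(X,x)\Rightarrow(Y,y)$ with $\zeta\cdot\gamma=(K\gamma)\cdot\xi$, there is a unique 2-arrow $\gamma':(X',x')\Rightarrow(Y',y')$ in $\mathbf{IdxPos}$ with $U\gamma'=\gamma$.
   Context: A doctrine is a functor $P:\mathcal C^{op}\to\mathbf{Pos}$; for $t:X\to Y$, $P(t):PY\to PX$ is reindexing. In the 2-category $\mathbf{IdxPos}$, a 1-arrow $(F,f):P\to Q$ (with $P:\mathcal C^{op}\to\mathbf{Pos}$, $Q:\mathcal D^{op}\to\mathbf{Pos}$) is a functor $F:\mathcal C\to\mathcal D$ with a natural transformation $f:P\Rightarrow Q\circ F^{op}$; a 2-arrow $\theta:(F,f)\Rightarrow(F',f')$ is a natural transformation $\theta:F\Rightarrow F'$ with $f_X(\alpha)\le Q(\theta_X)(f'_X(\alpha))$ for all $X,\alpha$; composition of $(G,g)$ then $(F,f)$ is $(FG,(fG^{op})\cdot g)$ (components $f_{GX}\circ g_X$), and vertical/horizontal composition of 2-arrows is that of natural transformations. A $K$-coalgebra for a comonad $(K,\mu,\nu)$ on $\mathcal C$ is $(C,c)$ with $c:C\to KC$, $\nu_C\circ c=\mathrm{id}_C$, $\mu_C\circ c=Kc\circ c$; a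 morphism $t:(C,c)\to(C',c')$ is $t:C\to C'$ with $c'\circ t=Kt\circ c$. *)

theory Defs
  imports Main
begin

text \<open>Small categories in hom-set style: a set of objects, hom-sets, composition
  (cmp g f = g after f) and identities.  Functors are given by an object map and an
  arrow map.\<close>

record ('o, 'a) cat =
  Obj :: "'o set"
  Hom :: "'o \<Rightarrow> 'o \<Rightarrow> 'a set"
  cmp :: "'a \<Rightarrow> 'a \<Rightarrow> 'a"
  idt :: "'o \<Rightarrow> 'a"

definition category :: "('o, 'a) cat \<Rightarrow> bool" where
  "category C \<longleftrightarrow>
     (\<forall>X Y. Hom C X Y \<noteq> {} \<longrightarrow> X \<in> Obj C \<and> Y \<in> Obj C) \<and>
     (\<forall>X\<in>Obj C. idt C X \<in> Hom C X X) \<and>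
     (\<forall>X Y Z f g. f \<in> Hom C X Y \<longrightarrow> g \<in> Hom C Y Z \<longrightarrow> cmp C g f \<in> Hom C X Z) \<and>
     (\<forall>X Y f. f \<in> Hom C X Y \<longrightarrow> cmp C f (idt C X) = f \<and> cmp C (idt C Y) f = f) \<and>
     (\<forall>W X Y Z f g h. f \<in> Hom C W X \<longrightarrow> g \<in> Hom C X Y \<longrightarrow> h \<in> Hom C Y Z \<longrightarrow>
        cmp C h (cmp C g f) = cmp C (cmp C h g) f)"

definition is_functor ::
  "('o, 'a) cat \<Rightarrow> ('o2, 'a2) cat \<Rightarrow> ('o \<Rightarrow> 'o2) \<Rightarrow> ('a \<Rightarrow> 'a2) \<Rightarrow> bool" where
  "is_functor C D Fo Fa \<longleftrightarrow> category C \<and> category D \<and>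
     (\<forall>X\<in>Obj C. Fo X \<in> Obj D) \<and>
     (\<forall>X Y f. f \<in> Hom C X Y \<longrightarrow> Fa f \<in> Hom D (Fo X) (Fo Y)) \<and>
     (\<forall>X\<in>Obj C. Fa (idt C X) = idt D (Fo X)) \<and>
     (\<forall>X Y Z f g. f \<in> Hom C X Y \<longrightarrow> g \<in> Hom C Y Z \<longrightarrow>
        Fa (cmp C g f) = cmp D (Fa g) (Fa f))"

definition nat_trans ::
  "('o, 'a) cat \<Rightarrow> ('o2, 'a2) cat \<Rightarrow> ('o \<Rightarrow> 'o2) \<Rightarrow> ('a \<Rightarrow> 'a2) \<Rightarrow>
   ('o \<Rightarrow> 'o2) \<Rightarrow> ('a \<Rightarrow> 'a2) \<Rightarrow> ('o \<Rightarrow> 'a2) \<Rightarrow> bool" where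
  "nat_trans C D Fo Fa Go Ga \<theta> \<longleftrightarrow> is_functor C D Fo Fa \<and> is_functor C D Go Ga \<and>
     (\<forall>X\<in>Obj C. \<theta> X \<in> Hom D (Fo X) (Go X)) \<and>
     (\<forall>X Y f. f \<in> Hom C X Y \<longrightarrow> cmp D (\<theta> Y) (Fa f) = cmp D (Ga f) (\<theta> X))"

definition poset_on :: "'p set \<Rightarrow> ('p \<Rightarrow> 'p \<Rightarrow> bool) \<Rightarrow> bool" where
  "poset_on A le \<longleftrightarrow> (\<forall>a\<in>A. le a a) \<and>
     (\<forall>a\<in>A. \<forall>b\<in>A. le a b \<and> le b a \<longrightarrow> a = b) \<and>
     (\<forall>a\<in>A. \<forall>b\<in>A. \<forall>c\<in>A. le a b \<and> le b c \<longrightarrow> le a c)"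

text \<open>A doctrine P : C^op \<rightarrow> Pos: for each object a poset (car, leq),
  and reindexing rdx t : P Y \<rightarrow> P X along t : X \<rightarrow> Y.\<close>

record ('o, 'a, 'p) doct =
  car :: "'o \<Rightarrow> 'p set"
  leq :: "'o \<Rightarrow> 'p \<Rightarrow> 'p \<Rightarrow> bool"
  rdx :: "'a \<Rightarrow> 'p \<Rightarrow> 'p"

definition doctrine :: "('o, 'a) cat \<Rightarrow> ('o, 'a, 'p) doct \<Rightarrow> bool" where
  "doctrine C P \<longleftrightarrow> category C \<and>
     (\<forall>X\<in>Obj C. poset_on (car P X) (leq P X)) \<and>
     (\<forall>X Y t. t \<in> Hom C X Y \<longrightarrow>
        (\<forall>\<alpha>\<in>car P Y. rdx P t \<alpha> \<in> car P X) \<and>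
        (\<forall>\<alpha>\<in>car P Y. \<forall>\<beta>\<in>car P Y. leq P Y \<alpha> \<beta> \<longrightarrow> leq P X (rdx P t \<alpha>) (rdx P t \<beta>))) \<and>
     (\<forall>X\<in>Obj C. \<forall>\<alpha>\<in>car P X. rdx P (idt C X) \<alpha> = \<alpha>) \<and>
     (\<forall>X Y Z f g. f \<in> Hom C X Y \<longrightarrow> g \<in> Hom C Y Z \<longrightarrow>
        (\<forall>\<alpha>\<in>car P Z. rdx P (cmp C g f) \<alpha> = rdx P f (rdx P g \<alpha>)))"

definition one_arrow ::
  "('o, 'a) cat \<Rightarrow> ('o, 'a, 'p) doct \<Rightarrow> ('o2, 'a2) cat \<Rightarrow> ('o2, 'a2, 'q) doct \<Rightarrow>
   ('o \<Rightarrow> 'o2) \<Rightarrow> ('a \<Rightarrow> 'a2) \<Rightarrow> ('o \<Rightarrow> 'p \<Rightarrow> 'q) \<Rightarrow> bool" where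
  "one_arrow C P D Q Fo Fa f \<longleftrightarrow> doctrine C P \<and> doctrine D Q \<and> is_functor C D Fo Fa \<and>
     (\<forall>X\<in>Obj C. (\<forall>\<alpha>\<in>car P X. f X \<alpha> \<in> car Q (Fo X)) \<and>
        (\<forall>\<alpha>\<in>car P X. \<forall>\<beta>\<in>car P X. leq P X \<alpha> \<beta> \<longrightarrow> leq Q (Fo X) (f X \<alpha>) (f X \<beta>))) \<and>
     (\<forall>X Y t. t \<in> Hom C X Y \<longrightarrow> (\<forall>\<alpha>\<in>car P Y. f X (rdx P t \<alpha>) = rdx Q (Fa t) (f Y \<alpha>)))"

definition two_arrow ::
  "('o, 'a) cat \<Rightarrow> ('o, 'a, 'p) doct \<Rightarrow> ('o2, 'a2) cat \<Rightarrow> ('o2, 'a2, 'q) doct \<Rightarrow>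
   ('o \<Rightarrow> 'o2) \<Rightarrow> ('a \<Rightarrow> 'a2) \<Rightarrow> ('o \<Rightarrow> 'p \<Rightarrow> 'q) \<Rightarrow>
   ('o \<Rightarrow> 'o2) \<Rightarrow> ('a \<Rightarrow> 'a2) \<Rightarrow> ('o \<Rightarrow> 'p \<Rightarrow> 'q) \<Rightarrow> ('o \<Rightarrow> 'a2) \<Rightarrow> bool" where
  "two_arrow C P D Q Fo Fa f Go Ga g \<theta> \<longleftrightarrow>
     one_arrow C P D Q Fo Fa f \<and> one_arrow C P D Q Go Ga g \<and> nat_trans C D Fo Fa Go Ga \<theta> \<and>
     (\<forall>X\<in>Obj C. \<forall>\<alpha>\<in>car P X. leq Q (Fo X) (f X \<alpha>) (rdx Q (\<theta> X) (g X \<alpha>)))"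

definition comonad_on ::
  "('o, 'a) cat \<Rightarrow> ('o, 'a, 'p) doct \<Rightarrow> ('o \<Rightarrow> 'o) \<Rightarrow> ('a \<Rightarrow> 'a) \<Rightarrow>
   ('o \<Rightarrow> 'p \<Rightarrow> 'p) \<Rightarrow> ('o \<Rightarrow> 'a) \<Rightarrow> ('o \<Rightarrow> 'a) \<Rightarrow> bool" where
  "comonad_on C P Ko Ka \<kappa> \<mu> \<nu> \<longleftrightarrow>
     one_arrow C P C P Ko Ka \<kappa> \<and>
     two_arrow C P C P Ko Ka \<kappa> (Ko \<circ> Ko) (Ka \<circ> Ka) (\<lambda>X \<alpha>. \<kappa> (Ko X) (\<kappa> X \<alpha>)) \<mu> \<and>
     two_arrow C P C P Ko Ka \<kappa> id id (\<lambda>X \<alpha>. \<alpha>) \<nu> \<and>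
     (\<forall>X\<in>Obj C. cmp C (Ka (\<mu> X)) (\<mu> X) = cmp C (\<mu> (Ko X)) (\<mu> X) \<and>
        cmp C (\<nu> (Ko X)) (\<mu> X) = idt C (Ko X) \<and>
        cmp C (Ka (\<nu> X)) (\<mu> X) = idt C (Ko X))"

definition coalgebra ::
  "('o, 'a) cat \<Rightarrow> ('o \<Rightarrow> 'o) \<Rightarrow> ('a \<Rightarrow> 'a) \<Rightarrow> ('o \<Rightarrow> 'a) \<Rightarrow> ('o \<Rightarrow> 'a) \<Rightarrow> 'o \<times> 'a \<Rightarrow> bool" where
  "coalgebra C Ko Ka \<mu> \<nu> A \<longleftrightarrow> fst A \<in> Obj C \<and> snd A \<in> Hom C (fst A) (Ko (fst A)) \<and>
     cmp C (\<nu> (fst A)) (snd A) = idt C (fst A) \<and>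
     cmp C (\<mu> (fst A)) (snd A) = cmp C (Ka (snd A)) (snd A)"

definition coalg_cat ::
  "('o, 'a) cat \<Rightarrow> ('o \<Rightarrow> 'o) \<Rightarrow> ('a \<Rightarrow> 'a) \<Rightarrow> ('o \<Rightarrow> 'a) \<Rightarrow> ('o \<Rightarrow> 'a) \<Rightarrow> ('o \<times> 'a, 'a) cat" where
  "coalg_cat C Ko Ka \<mu> \<nu> =
     \<lparr> Obj = {A. coalgebra C Ko Ka \<mu> \<nu> A},
       Hom = (\<lambda>A B. if coalgebra C Ko Ka \<mu> \<nu> A \<and> coalgebra C Ko Ka \<mu> \<nu> B
                     then {t \<in> Hom C (fst A) (fst B). cmp C (snd B) t = cmp C (Ka t) (snd A)}
                     else {}),
       cmp = cmp C,
       idt = (\<lambda>A. idt C (fst A)) \<rparr>"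

definition coalg_doct ::
  "('o, 'a, 'p) doct \<Rightarrow> ('o \<Rightarrow> 'p \<Rightarrow> 'p) \<Rightarrow> ('o \<times> 'a, 'a, 'p) doct" where
  "coalg_doct P \<kappa> =
     \<lparr> car = (\<lambda>A. {\<alpha> \<in> car P (fst A). leq P (fst A) \<alpha> (rdx P (snd A) (\<kappa> (fst A) \<alpha>))}),
       leq = (\<lambda>A. leq P (fst A)),
       rdx = rdx P \<rparr>"

definition em_cone ::
  "('e, 'd) cat \<Rightarrow> ('e, 'd, 'q) doct \<Rightarrow> ('o, 'a) cat \<Rightarrow> ('o, 'a, 'p) doct \<Rightarrow>
   ('o \<Rightarrow> 'o) \<Rightarrow> ('a \<Rightarrow> 'a) \<Rightarrow> ('o \<Rightarrow> 'p \<Rightarrow> 'p) \<Rightarrow> ('o \<Rightarrow> 'a) \<Rightarrow> ('o \<Rightarrow> 'a) \<Rightarrow>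
   ('e \<Rightarrow> 'o) \<Rightarrow> ('d \<Rightarrow> 'a) \<Rightarrow> ('e \<Rightarrow> 'q \<Rightarrow> 'p) \<Rightarrow> ('e \<Rightarrow> 'a) \<Rightarrow> bool" where
  "em_cone D Q C P Ko Ka \<kappa> \<mu> \<nu> Xo Xa x \<xi> \<longleftrightarrow>
     two_arrow D Q C P Xo Xa x (Ko \<circ> Xo) (Ka \<circ> Xa) (\<lambda>E \<beta>. \<kappa> (Xo E) (x E \<beta>)) \<xi> \<and>
     (\<forall>E\<in>Obj D. cmp C (\<mu> (Xo E)) (\<xi> E) = cmp C (Ka (\<xi> E)) (\<xi> E) \<and>
        cmp C (\<nu> (Xo E)) (\<xi> E) = idt C (Xo E))"

text \<open>(X',x') : Q \<rightarrow> P^K is a 1-arrow with (U,u)\<circ>(X',x') = (X,x) and \<omega>(X',x') = \<xi>.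
  Equality of 1-arrows is equality of the components on their domains.\<close>

definition em_lift ::
  "('e, 'd) cat \<Rightarrow> ('e, 'd, 'q) doct \<Rightarrow> ('o, 'a) cat \<Rightarrow> ('o, 'a, 'p) doct \<Rightarrow>
   ('o \<Rightarrow> 'o) \<Rightarrow> ('a \<Rightarrow> 'a) \<Rightarrow> ('o \<Rightarrow> 'p \<Rightarrow> 'p) \<Rightarrow> ('o \<Rightarrow> 'a) \<Rightarrow> ('o \<Rightarrow> 'a) \<Rightarrow>
   ('e \<Rightarrow> 'o) \<Rightarrow> ('d \<Rightarrow> 'a) \<Rightarrow> ('e \<Rightarrow> 'q \<Rightarrow> 'p) \<Rightarrow> ('e \<Rightarrow> 'a) \<Rightarrow>
   ('e \<Rightarrow> 'o \<times> 'a) \<Rightarrow> ('d \<Rightarrow> 'a) \<Rightarrow> ('e \<Rightarrow> 'q \<Rightarrow> 'p) \<Rightarrow> bool" where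
  "em_lift D Q C P Ko Ka \<kappa> \<mu> \<nu> Xo Xa x \<xi> Xo' Xa' x' \<longleftrightarrow>
     one_arrow D Q (coalg_cat C Ko Ka \<mu> \<nu>) (coalg_doct P \<kappa>) Xo' Xa' x' \<and>
     (\<forall>E\<in>Obj D. fst (Xo' E) = Xo E \<and> snd (Xo' E) = \<xi> E) \<and>
     (\<forall>E1 E2 h. h \<in> Hom D E1 E2 \<longrightarrow> Xa' h = Xa h) \<and>
     (\<forall>E\<in>Obj D. \<forall>\<beta>\<in>car Q E. x' E \<beta> = x E \<beta>)"

definition same_one_arrow ::
  "('e, 'd) cat \<Rightarrow> ('e, 'd, 'q) doct \<Rightarrow>
   ('e \<Rightarrow> 'o) \<Rightarrow> ('d \<Rightarrow> 'a) \<Rightarrow> ('e \<Rightarrow> 'q \<Rightarrow> 'p) \<Rightarrow>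
   ('e \<Rightarrow> 'o) \<Rightarrow> ('d \<Rightarrow> 'a) \<Rightarrow> ('e \<Rightarrow> 'q \<Rightarrow> 'p) \<Rightarrow> bool" where
  "same_one_arrow D Q Fo Fa f Go Ga g \<longleftrightarrow>
     (\<forall>E\<in>Obj D. Fo E = Go E) \<and>
     (\<forall>E1 E2 h. h \<in> Hom D E1 E2 \<longrightarrow> Fa h = Ga h) \<and>
     (\<forall>E\<in>Obj D. \<forall>\<beta>\<in>car Q E. f E \<beta> = g E \<beta>)"

end

theory Submission
  imports Defs
begin

(* A pair ((X, x), \<xi>) as in (a) is the same thing as a
   lift of X to coalgebras, E \<mapsto> (X E, \<xi> E): the laws on \<xi> are the coalgebra laws and
   naturality of \<xi> says that each X h is a coalgebra morphism.  The 2-arrow inequality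
   x \<le> P(\<xi>)(\<kappa> x) says precisely that x lands in P^K, and P^K is closed under
   reindexing along coalgebra morphisms by naturality of \<kappa>.  As the forgetful 1-arrow
   (U, u) only forgets the structure maps, which the lift fixes to be \<xi>, the lift is unique,
   and a 2-arrow \<gamma> whose components are coalgebra morphisms is a 2-arrow between the lifts. *)

lemma categoryD:
  assumes "category C"
  shows category_Hom_Obj: "f \<in> Hom C X Y \<Longrightarrow> X \<in> Obj C \<and> Y \<in> Obj C"
    and category_idt_Hom: "X \<in> Obj C \<Longrightarrow> idt C X \<in> Hom C X X"
    and category_cmp_Hom: "f \<in> Hom C X Y \<Longrightarrow> g \<in> Hom C Y Z \<Longrightarrow> cmp C g f \<in> Hom C X Z"
    and category_cmp_idt_left: "f \<in> Hom C X Y \<Longrightarrow> cmp C (idt C Y) f = f"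
    and category_cmp_idt_right: "f \<in> Hom C X Y \<Longrightarrow> cmp C f (idt C X) = f"
    and category_cmp_assoc: "f \<in> Hom C W X \<Longrightarrow> g \<in> Hom C X Y \<Longrightarrow> h \<in> Hom C Y Z \<Longrightarrow>
        cmp C h (cmp C g f) = cmp C (cmp C h g) f"
  using assms unfolding category_def by (blast+)[6]

lemma is_functorD:
  assumes "is_functor C D Fo Fa"
  shows is_functor_dom_category: "category C"
    and is_functor_cod_category: "category D"
    and is_functor_Obj: "X \<in> Obj C \<Longrightarrow> Fo X \<in> Obj D"
    and is_functor_Hom: "f \<in> Hom C X Y \<Longrightarrow> Fa f \<in> Hom D (Fo X) (Fo Y)"
    and is_functor_idt: "X \<in> Obj C \<Longrightarrow> Fa (idt C X) = idt D (Fo X)"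
    and is_functor_cmp: "f \<in> Hom C X Y \<Longrightarrow> g \<in> Hom C Y Z \<Longrightarrow> Fa (cmp C g f) = cmp D (Fa g) (Fa f)"
  using assms unfolding is_functor_def by (blast+)[6]

lemma nat_transD:
  assumes "nat_trans C D Fo Fa Go Ga \<theta>"
  shows nat_trans_dom_functor: "is_functor C D Fo Fa"
    and nat_trans_Hom: "X \<in> Obj C \<Longrightarrow> \<theta> X \<in> Hom D (Fo X) (Go X)"
    and nat_trans_naturality: "f \<in> Hom C X Y \<Longrightarrow> cmp D (\<theta> Y) (Fa f) = cmp D (Ga f) (\<theta> X)"
  using assms unfolding nat_trans_def by (blast+)[3]

lemma doctrineD:
  assumes "doctrine C P"
  shows doctrine_category: "category C"
    and doctrine_poset_on: "X \<in> Obj C \<Longrightarrow> poset_on (car P X) (leq P X)"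
    and doctrine_rdx_car: "t \<in> Hom C X Y \<Longrightarrow> \<alpha> \<in> car P Y \<Longrightarrow> rdx P t \<alpha> \<in> car P X"
    and doctrine_rdx_mono: "t \<in> Hom C X Y \<Longrightarrow> \<alpha> \<in> car P Y \<Longrightarrow> \<beta> \<in> car P Y \<Longrightarrow> leq P Y \<alpha> \<beta> \<Longrightarrow>
        leq P X (rdx P t \<alpha>) (rdx P t \<beta>)"
    and doctrine_rdx_idt: "X \<in> Obj C \<Longrightarrow> \<alpha> \<in> car P X \<Longrightarrow> rdx P (idt C X) \<alpha> = \<alpha>"
    and doctrine_rdx_cmp: "f \<in> Hom C X Y \<Longrightarrow> g \<in> Hom C Y Z \<Longrightarrow> \<alpha> \<in> car P Z \<Longrightarrow>
        rdx P (cmp C g f) \<alpha> = rdx P f (rdx P g \<alpha>)"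
  using assms unfolding doctrine_def by (blast+)[6]

lemma one_arrowD:
  assumes "one_arrow C P D Q Fo Fa f"
  shows one_arrow_dom_doctrine: "doctrine C P"
    and one_arrow_functor: "is_functor C D Fo Fa"
    and one_arrow_car: "X \<in> Obj C \<Longrightarrow> \<alpha> \<in> car P X \<Longrightarrow> f X \<alpha> \<in> car Q (Fo X)"
    and one_arrow_mono: "X \<in> Obj C \<Longrightarrow> \<alpha> \<in> car P X \<Longrightarrow> \<beta> \<in> car P X \<Longrightarrow> leq P X \<alpha> \<beta> \<Longrightarrow>
       leq Q (Fo X) (f X \<alpha>) (f X \<beta>)"
    and one_arrow_rdx: "t \<in> Hom C X Y \<Longrightarrow> \<alpha> \<in> car P Y \<Longrightarrow> f X (rdx P t \<alpha>) = rdx Q (Fa t) (f Y \<alpha>)"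
  using assms unfolding one_arrow_def by (blast+)[5]

lemma two_arrowD:
  assumes "two_arrow C P D Q Fo Fa f Go Ga g \<theta>"
  shows two_arrow_dom_arrow: "one_arrow C P D Q Fo Fa f"
    and two_arrow_nat_trans: "nat_trans C D Fo Fa Go Ga \<theta>"
    and two_arrow_leq: "X \<in> Obj C \<Longrightarrow> \<alpha> \<in> car P X \<Longrightarrow> leq Q (Fo X) (f X \<alpha>) (rdx Q (\<theta> X) (g X \<alpha>))"
  using assms unfolding two_arrow_def by (blast+)[3]

lemma is_functor_comp:
  assumes F: "is_functor A B Fo Fa" and G: "is_functor B C Go Ga"
  shows "is_functor A C (Go \<circ> Fo) (Ga \<circ> Fa)"
proof -
  have "Ga (Fa (cmp A g f)) = cmp C (Ga (Fa g)) (Ga (Fa f))"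
    if "f \<in> Hom A X Y" "g \<in> Hom A Y Z" for f g X Y Z
    using that is_functor_cmp[OF F] is_functor_cmp[OF G] is_functor_Hom[OF F] by metis
  then show ?thesis
    using is_functorD[OF F] is_functorD[OF G] unfolding is_functor_def by auto
qed

lemma poset_on_subset: "poset_on A le \<Longrightarrow> B \<subseteq> A \<Longrightarrow> poset_on B le"
  unfolding poset_on_def by blast

lemma Obj_coalg_cat [simp]: "A \<in> Obj (coalg_cat C Ko Ka \<mu> \<nu>) \<longleftrightarrow> coalgebra C Ko Ka \<mu> \<nu> A"
  by (simp add: coalg_cat_def)

lemma Hom_coalg_cat [simp]:
  "t \<in> Hom (coalg_cat C Ko Ka \<mu> \<nu>) A B \<longleftrightarrow>
     coalgebra C Ko Ka \<mu> \<nu> A \<and> coalgebra C Ko Ka \<mu> \<nu> B \<and>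
     t \<in> Hom C (fst A) (fst B) \<and> cmp C (snd B) t = cmp C (Ka t) (snd A)"
  by (auto simp: coalg_cat_def)

lemma cmp_coalg_cat [simp]: "cmp (coalg_cat C Ko Ka \<mu> \<nu>) = cmp C"
  and idt_coalg_cat [simp]: "idt (coalg_cat C Ko Ka \<mu> \<nu>) A = idt C (fst A)"
  by (simp_all add: coalg_cat_def)

lemma car_coalg_doct [simp]:
  "\<alpha> \<in> car (coalg_doct P \<kappa>) A \<longleftrightarrow>
     \<alpha> \<in> car P (fst A) \<and> leq P (fst A) \<alpha> (rdx P (snd A) (\<kappa> (fst A) \<alpha>))"
  by (simp add: coalg_doct_def)

lemma leq_coalg_doct [simp]: "leq (coalg_doct P \<kappa>) A = leq P (fst A)"
  and rdx_coalg_doct [simp]: "rdx (coalg_doct P \<kappa>) = rdx P"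
  by (simp_all add: coalg_doct_def)

lemma coalgebraD:
  assumes "coalgebra C Ko Ka \<mu> \<nu> A"
  shows coalgebra_Obj: "fst A \<in> Obj C"
    and coalgebra_Hom: "snd A \<in> Hom C (fst A) (Ko (fst A))"
  using assms unfolding coalgebra_def by blast+

lemma coalg_morphism_cmp:
  assumes K: "is_functor C C Ko Ka"
    and f: "f \<in> Hom C X Y" and g: "g \<in> Hom C Y Z"
    and a: "a \<in> Hom C X (Ko X)" and b: "b \<in> Hom C Y (Ko Y)" and c: "c \<in> Hom C Z (Ko Z)"
    and f_mor: "cmp C b f = cmp C (Ka f) a" and g_mor: "cmp C c g = cmp C (Ka g) b"
  shows "cmp C c (cmp C g f) = cmp C (Ka (cmp C g f)) a"
proof -
  have C: "category C" using K by (rule is_functor_dom_category)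
  note assoc = category_cmp_assoc[OF C]
  have Kf: "Ka f \<in> Hom C (Ko X) (Ko Y)" and Kg: "Ka g \<in> Hom C (Ko Y) (Ko Z)"
    using is_functor_Hom[OF K] f g by blast+
  have "cmp C c (cmp C g f) = cmp C (cmp C (Ka g) b) f"
    using assoc[OF f g c] g_mor by simp
  also have "\<dots> = cmp C (Ka g) (cmp C (Ka f) a)"
    using assoc[OF f b Kg] f_mor by simp
  also have "\<dots> = cmp C (Ka (cmp C g f)) a"
    using assoc[OF a Kf Kg] is_functor_cmp[OF K f g] by simp
  finally show ?thesis .
qed

lemma category_coalg_cat:
  assumes K: "is_functor C C Ko Ka"
  shows "category (coalg_cat C Ko Ka \<mu> \<nu>)"
proof -
  have C: "category C" using K by (rule is_functor_dom_category)
  have idt_mor: "cmp C (snd A) (idt C (fst A)) = cmp C (Ka (idt C (fst A))) (snd A)"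
    if "coalgebra C Ko Ka \<mu> \<nu> A" for A
    using coalgebraD[OF that] categoryD[OF C] is_functor_idt[OF K] by metis
  show ?thesis
    unfolding category_def
  proof (intro conjI allI impI ballI)
    fix A B Z f g
    assume "f \<in> Hom (coalg_cat C Ko Ka \<mu> \<nu>) A B" "g \<in> Hom (coalg_cat C Ko Ka \<mu> \<nu>) B Z"
    then have A: "coalgebra C Ko Ka \<mu> \<nu> A" and B: "coalgebra C Ko Ka \<mu> \<nu> B"
      and Z: "coalgebra C Ko Ka \<mu> \<nu> Z"
      and f: "f \<in> Hom C (fst A) (fst B)" and g: "g \<in> Hom C (fst B) (fst Z)"
      and f_mor: "cmp C (snd B) f = cmp C (Ka f) (snd A)"
      and g_mor: "cmp C (snd Z) g = cmp C (Ka g) (snd B)"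
      by simp_all
    show "cmp (coalg_cat C Ko Ka \<mu> \<nu>) g f \<in> Hom (coalg_cat C Ko Ka \<mu> \<nu>) A Z"
      using A Z category_cmp_Hom[OF C f g] coalg_morphism_cmp[OF K f g
          coalgebra_Hom[OF A] coalgebra_Hom[OF B] coalgebra_Hom[OF Z] f_mor g_mor]
      by simp
  next
    fix A B assume "Hom (coalg_cat C Ko Ka \<mu> \<nu>) A B \<noteq> {}"
    then show "A \<in> Obj (coalg_cat C Ko Ka \<mu> \<nu>)" "B \<in> Obj (coalg_cat C Ko Ka \<mu> \<nu>)"
      by auto
  next
    fix A assume "A \<in> Obj (coalg_cat C Ko Ka \<mu> \<nu>)"
    then have A: "coalgebra C Ko Ka \<mu> \<nu> A" by simp
    show "idt (coalg_cat C Ko Ka \<mu> \<nu>) A \<in> Hom (coalg_cat C Ko Ka \<mu> \<nu>) A A"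
      using A idt_mor[OF A] category_idt_Hom[OF C coalgebra_Obj[OF A]] by simp
  next
    fix A B f assume "f \<in> Hom (coalg_cat C Ko Ka \<mu> \<nu>) A B"
    then have "f \<in> Hom C (fst A) (fst B)" by simp
    then show "cmp (coalg_cat C Ko Ka \<mu> \<nu>) f (idt (coalg_cat C Ko Ka \<mu> \<nu>) A) = f"
      "cmp (coalg_cat C Ko Ka \<mu> \<nu>) (idt (coalg_cat C Ko Ka \<mu> \<nu>) B) f = f"
      using categoryD[OF C] by simp_all
  next
    fix W X Y Z f g h
    assume "f \<in> Hom (coalg_cat C Ko Ka \<mu> \<nu>) W X" "g \<in> Hom (coalg_cat C Ko Ka \<mu> \<nu>) X Y"
      "h \<in> Hom (coalg_cat C Ko Ka \<mu> \<nu>) Y Z"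
    then show "cmp (coalg_cat C Ko Ka \<mu> \<nu>) h (cmp (coalg_cat C Ko Ka \<mu> \<nu>) g f) =
        cmp (coalg_cat C Ko Ka \<mu> \<nu>) (cmp (coalg_cat C Ko Ka \<mu> \<nu>) h g) f"
      using category_cmp_assoc[OF C] by auto
  qed
qed

lemma coalg_morphism_rdx_leq:
  assumes K: "one_arrow C P C P Ko Ka \<kappa>"
    and t: "t \<in> Hom C X Y" and a: "a \<in> Hom C X (Ko X)" and b: "b \<in> Hom C Y (Ko Y)"
    and t_mor: "cmp C b t = cmp C (Ka t) a"
    and \<alpha>: "\<alpha> \<in> car P Y" and \<alpha>_leq: "leq P Y \<alpha> (rdx P b (\<kappa> Y \<alpha>))"
  shows "leq P X (rdx P t \<alpha>) (rdx P a (\<kappa> X (rdx P t \<alpha>)))"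
proof -
  have P: "doctrine C P" using K by (rule one_arrow_dom_doctrine)
  have Kt: "Ka t \<in> Hom C (Ko X) (Ko Y)"
    using is_functor_Hom[OF one_arrow_functor[OF K] t] .
  have \<kappa>\<alpha>: "\<kappa> Y \<alpha> \<in> car P (Ko Y)"
    using one_arrow_car[OF K _ \<alpha>] category_Hom_Obj[OF doctrine_category[OF P] t] by blast
  have "rdx P a (\<kappa> X (rdx P t \<alpha>)) = rdx P a (rdx P (Ka t) (\<kappa> Y \<alpha>))"
    using one_arrow_rdx[OF K t \<alpha>] by simp
  also have "\<dots> = rdx P (cmp C b t) (\<kappa> Y \<alpha>)"
    using doctrine_rdx_cmp[OF P a Kt \<kappa>\<alpha>] t_mor by simp
  also have "\<dots> = rdx P t (rdx P b (\<kappa> Y \<alpha>))"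
    using doctrine_rdx_cmp[OF P t b \<kappa>\<alpha>] .
  finally show ?thesis
    using doctrine_rdx_mono[OF P t \<alpha> doctrine_rdx_car[OF P b \<kappa>\<alpha>] \<alpha>_leq] by simp
qed

lemma doctrine_coalg_doct:
  assumes K: "one_arrow C P C P Ko Ka \<kappa>"
  shows "doctrine (coalg_cat C Ko Ka \<mu> \<nu>) (coalg_doct P \<kappa>)"
proof -
  have P: "doctrine C P" using K by (rule one_arrow_dom_doctrine)
  show ?thesis
    unfolding doctrine_def
  proof (intro conjI allI impI ballI)
    show "category (coalg_cat C Ko Ka \<mu> \<nu>)"
      using one_arrow_functor[OF K] by (rule category_coalg_cat)
  next
    fix A assume "A \<in> Obj (coalg_cat C Ko Ka \<mu> \<nu>)"
    then have "poset_on (car P (fst A)) (leq P (fst A))"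
      using doctrine_poset_on[OF P] coalgebra_Obj[of C Ko Ka \<mu> \<nu> A] by simp
    moreover have "car (coalg_doct P \<kappa>) A \<subseteq> car P (fst A)" by auto
    ultimately show "poset_on (car (coalg_doct P \<kappa>) A) (leq (coalg_doct P \<kappa>) A)"
      using poset_on_subset by simp
  next
    fix A B t \<alpha>
    assume "t \<in> Hom (coalg_cat C Ko Ka \<mu> \<nu>) A B" and \<alpha>: "\<alpha> \<in> car (coalg_doct P \<kappa>) B"
    then have A: "coalgebra C Ko Ka \<mu> \<nu> A" and B: "coalgebra C Ko Ka \<mu> \<nu> B"
      and t: "t \<in> Hom C (fst A) (fst B)" and t_mor: "cmp C (snd B) t = cmp C (Ka t) (snd A)"
      by simp_all
    show "rdx (coalg_doct P \<kappa>) t \<alpha> \<in> car (coalg_doct P \<kappa>) A"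
      using \<alpha> doctrine_rdx_car[OF P t] coalg_morphism_rdx_leq[OF K t coalgebra_Hom[OF A]
          coalgebra_Hom[OF B] t_mor]
      by simp
  next
    fix A B t \<alpha> \<beta>
    assume "t \<in> Hom (coalg_cat C Ko Ka \<mu> \<nu>) A B" "\<alpha> \<in> car (coalg_doct P \<kappa>) B"
      "\<beta> \<in> car (coalg_doct P \<kappa>) B" "leq (coalg_doct P \<kappa>) B \<alpha> \<beta>"
    then show "leq (coalg_doct P \<kappa>) A (rdx (coalg_doct P \<kappa>) t \<alpha>) (rdx (coalg_doct P \<kappa>) t \<beta>)"
      using doctrine_rdx_mono[OF P] by auto
  next
    fix A \<alpha> assume "A \<in> Obj (coalg_cat C Ko Ka \<mu> \<nu>)" "\<alpha> \<in> car (coalg_doct P \<kappa>) A"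
    then show "rdx (coalg_doct P \<kappa>) (idt (coalg_cat C Ko Ka \<mu> \<nu>) A) \<alpha> = \<alpha>"
      using doctrine_rdx_idt[OF P] coalgebra_Obj[of C Ko Ka \<mu> \<nu> A] by simp
  next
    fix A B Z f g \<alpha>
    assume "f \<in> Hom (coalg_cat C Ko Ka \<mu> \<nu>) A B" "g \<in> Hom (coalg_cat C Ko Ka \<mu> \<nu>) B Z"
      "\<alpha> \<in> car (coalg_doct P \<kappa>) Z"
    then show "rdx (coalg_doct P \<kappa>) (cmp (coalg_cat C Ko Ka \<mu> \<nu>) g f) \<alpha> =
        rdx (coalg_doct P \<kappa>) f (rdx (coalg_doct P \<kappa>) g \<alpha>)"
      using doctrine_rdx_cmp[OF P] by auto
  qed
qed

lemma is_functor_forget_coalg: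
  assumes K: "is_functor C C Ko Ka"
  shows "is_functor (coalg_cat C Ko Ka \<mu> \<nu>) C fst id"
  using category_coalg_cat[OF K] is_functor_dom_category[OF K] coalgebra_Obj[of C Ko Ka \<mu> \<nu>]
  unfolding is_functor_def by auto

lemma em_cone_forget:
  assumes K: "one_arrow C P C P Ko Ka \<kappa>"
  shows "em_cone (coalg_cat C Ko Ka \<mu> \<nu>) (coalg_doct P \<kappa>) C P Ko Ka \<kappa> \<mu> \<nu>
           fst id (\<lambda>A \<alpha>. \<alpha>) snd"
proof -
  let ?CK = "coalg_cat C Ko Ka \<mu> \<nu>" and ?PK = "coalg_doct P \<kappa>"
  have P: "doctrine C P" using K by (rule one_arrow_dom_doctrine)
  have PK: "doctrine ?CK ?PK" using K by (rule doctrine_coalg_doct)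
  have U: "is_functor ?CK C fst id"
    using one_arrow_functor[OF K] by (rule is_functor_forget_coalg)
  have KU: "is_functor ?CK C (Ko \<circ> fst) (Ka \<circ> id)"
    using U one_arrow_functor[OF K] by (rule is_functor_comp)
  have u: "one_arrow ?CK ?PK C P fst id (\<lambda>A \<alpha>. \<alpha>)"
    unfolding one_arrow_def using P PK U by auto
  have Ku: "one_arrow ?CK ?PK C P (Ko \<circ> fst) (Ka \<circ> id) (\<lambda>A \<alpha>. \<kappa> (fst A) \<alpha>)"
    unfolding one_arrow_def
    using P PK KU coalgebra_Obj[of C Ko Ka \<mu> \<nu>]
      one_arrow_car[OF K] one_arrow_mono[OF K] one_arrow_rdx[OF K]
    by auto
  have \<omega>: "nat_trans ?CK C fst id (Ko \<circ> fst) (Ka \<circ> id) snd"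
    unfolding nat_trans_def using U KU coalgebra_Hom[of C Ko Ka \<mu> \<nu>] by auto
  show ?thesis
    unfolding em_cone_def two_arrow_def using u Ku \<omega> by (auto simp: coalgebra_def)
qed

lemma is_functor_coalg_lift:
  assumes K: "is_functor C C Ko Ka" and X: "is_functor D C Xo Xa"
    and \<xi>: "nat_trans D C Xo Xa (Ko \<circ> Xo) (Ka \<circ> Xa) \<xi>"
    and \<xi>_coalg: "\<And>E. E \<in> Obj D \<Longrightarrow> coalgebra C Ko Ka \<mu> \<nu> (Xo E, \<xi> E)"
  shows "is_functor D (coalg_cat C Ko Ka \<mu> \<nu>) (\<lambda>E. (Xo E, \<xi> E)) Xa"
proof -
  have D: "category D" using X by (rule is_functor_dom_category)
  have "Xa h \<in> Hom (coalg_cat C Ko Ka \<mu> \<nu>) (Xo E1, \<xi> E1) (Xo E2, \<xi> E2)"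
    if h: "h \<in> Hom D E1 E2" for h E1 E2
    using category_Hom_Obj[OF D h] \<xi>_coalg is_functor_Hom[OF X h] nat_trans_naturality[OF \<xi> h]
    by simp
  then show ?thesis
    unfolding is_functor_def
    using D category_coalg_cat[OF K] \<xi>_coalg is_functor_idt[OF X] is_functor_cmp[OF X] by simp
qed

lemma em_cone_coalgebra:
  assumes cone: "em_cone D Q C P Ko Ka \<kappa> \<mu> \<nu> Xo Xa x \<xi>" and E: "E \<in> Obj D"
  shows "coalgebra C Ko Ka \<mu> \<nu> (Xo E, \<xi> E)"
proof -
  have \<xi>: "nat_trans D C Xo Xa (Ko \<circ> Xo) (Ka \<circ> Xa) \<xi>"
    and laws: "cmp C (\<mu> (Xo E)) (\<xi> E) = cmp C (Ka (\<xi> E)) (\<xi> E)"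
      "cmp C (\<nu> (Xo E)) (\<xi> E) = idt C (Xo E)"
    using cone E unfolding em_cone_def two_arrow_def by blast+
  show ?thesis
    unfolding coalgebra_def
    using is_functor_Obj[OF nat_trans_dom_functor[OF \<xi>] E] nat_trans_Hom[OF \<xi> E] laws by simp
qed

lemma em_lift_exists:
  assumes K: "one_arrow C P C P Ko Ka \<kappa>"
    and cone: "em_cone D Q C P Ko Ka \<kappa> \<mu> \<nu> Xo Xa x \<xi>"
  shows "em_lift D Q C P Ko Ka \<kappa> \<mu> \<nu> Xo Xa x \<xi> (\<lambda>E. (Xo E, \<xi> E)) Xa x"
proof -
  have \<xi>: "two_arrow D Q C P Xo Xa x (Ko \<circ> Xo) (Ka \<circ> Xa) (\<lambda>E \<beta>. \<kappa> (Xo E) (x E \<beta>)) \<xi>"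
    using cone unfolding em_cone_def by blast
  have x: "one_arrow D Q C P Xo Xa x" using \<xi> by (rule two_arrow_dom_arrow)
  have X': "is_functor D (coalg_cat C Ko Ka \<mu> \<nu>) (\<lambda>E. (Xo E, \<xi> E)) Xa"
    using one_arrow_functor[OF K] one_arrow_functor[OF x] two_arrow_nat_trans[OF \<xi>]
      em_cone_coalgebra[OF cone]
    by (rule is_functor_coalg_lift)
  have "one_arrow D Q (coalg_cat C Ko Ka \<mu> \<nu>) (coalg_doct P \<kappa>) (\<lambda>E. (Xo E, \<xi> E)) Xa x"
    unfolding one_arrow_def
    using one_arrow_dom_doctrine[OF x] doctrine_coalg_doct[OF K] X'
      one_arrow_car[OF x] two_arrow_leq[OF \<xi>] one_arrow_mono[OF x] one_arrow_rdx[OF x]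
    by simp
  then show ?thesis unfolding em_lift_def by simp
qed

lemma em_lift_unique:
  assumes "em_lift D Q C P Ko Ka \<kappa> \<mu> \<nu> Xo Xa x \<xi> Xo' Xa' x'"
    and "em_lift D Q C P Ko Ka \<kappa> \<mu> \<nu> Xo Xa x \<xi> Zo Za z"
  shows "same_one_arrow D Q Xo' Xa' x' Zo Za z"
  using assms unfolding em_lift_def same_one_arrow_def by (simp add: prod_eq_iff)

lemma two_arrow_em_lift:
  assumes XL: "em_lift D Q C P Ko Ka \<kappa> \<mu> \<nu> Xo Xa x \<xi> Xo' Xa' x'"
    and YL: "em_lift D Q C P Ko Ka \<kappa> \<mu> \<nu> Yo Ya y \<zeta> Yo' Ya' y'"
    and \<gamma>: "two_arrow D Q C P Xo Xa x Yo Ya y \<gamma>"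
    and \<gamma>_mor: "\<forall>E\<in>Obj D. cmp C (\<zeta> E) (\<gamma> E) = cmp C (Ka (\<gamma> E)) (\<xi> E)"
  shows "two_arrow D Q (coalg_cat C Ko Ka \<mu> \<nu>) (coalg_doct P \<kappa>) Xo' Xa' x' Yo' Ya' y' \<gamma>"
proof -
  let ?CK = "coalg_cat C Ko Ka \<mu> \<nu>" and ?PK = "coalg_doct P \<kappa>"
  have x': "one_arrow D Q ?CK ?PK Xo' Xa' x'"
    and Xo': "\<And>E. E \<in> Obj D \<Longrightarrow> fst (Xo' E) = Xo E \<and> snd (Xo' E) = \<xi> E"
    and Xa': "\<And>E1 E2 h. h \<in> Hom D E1 E2 \<Longrightarrow> Xa' h = Xa h"
    and x'_eq: "\<And>E \<beta>. E \<in> Obj D \<Longrightarrow> \<beta> \<in> car Q E \<Longrightarrow> x' E \<beta> = x E \<beta>"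
    using XL unfolding em_lift_def by blast+
  have y': "one_arrow D Q ?CK ?PK Yo' Ya' y'"
    and Yo': "\<And>E. E \<in> Obj D \<Longrightarrow> fst (Yo' E) = Yo E \<and> snd (Yo' E) = \<zeta> E"
    and Ya': "\<And>E1 E2 h. h \<in> Hom D E1 E2 \<Longrightarrow> Ya' h = Ya h"
    and y'_eq: "\<And>E \<beta>. E \<in> Obj D \<Longrightarrow> \<beta> \<in> car Q E \<Longrightarrow> y' E \<beta> = y E \<beta>"
    using YL unfolding em_lift_def by blast+
  have X': "is_functor D ?CK Xo' Xa'" and Y': "is_functor D ?CK Yo' Ya'"
    using one_arrow_functor[OF x'] one_arrow_functor[OF y'] .
  have \<gamma>_nat: "nat_trans D C Xo Xa Yo Ya \<gamma>" using \<gamma> by (rule two_arrow_nat_trans)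
  have "\<gamma> E \<in> Hom ?CK (Xo' E) (Yo' E)" if E: "E \<in> Obj D" for E
    using is_functor_Obj[OF X' E] is_functor_Obj[OF Y' E] nat_trans_Hom[OF \<gamma>_nat E]
      Xo'[OF E] Yo'[OF E] \<gamma>_mor E
    by simp
  then have "nat_trans D ?CK Xo' Xa' Yo' Ya' \<gamma>"
    unfolding nat_trans_def using X' Y' nat_trans_naturality[OF \<gamma>_nat] Xa' Ya' by simp
  moreover have "leq ?PK (Xo' E) (x' E \<alpha>) (rdx ?PK (\<gamma> E) (y' E \<alpha>))"
    if "E \<in> Obj D" "\<alpha> \<in> car Q E" for E \<alpha>
    using two_arrow_leq[OF \<gamma> that] Xo'[OF that(1)] x'_eq[OF that] y'_eq[OF that] by simp
  ultimately show ?thesis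
    unfolding two_arrow_def using x' y' by blast
qed

theorem theorem6p4:
  fixes C :: "('o, 'a) cat" and P :: "('o, 'a, 'p) doct"
    and D :: "('e, 'd) cat" and Q :: "('e, 'd, 'q) doct"
  assumes comonad: "comonad_on C P Ko Ka \<kappa> \<mu> \<nu>"
  shows "em_cone (coalg_cat C Ko Ka \<mu> \<nu>) (coalg_doct P \<kappa>) C P Ko Ka \<kappa> \<mu> \<nu>
           fst id (\<lambda>A \<alpha>. \<alpha>) snd
    \<and> (\<forall>Xo Xa x \<xi>. em_cone D Q C P Ko Ka \<kappa> \<mu> \<nu> Xo Xa x \<xi> \<longrightarrow>
         (\<exists>Xo' Xa' x'. em_lift D Q C P Ko Ka \<kappa> \<mu> \<nu> Xo Xa x \<xi> Xo' Xa' x' \<and>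
           (\<forall>Zo Za z. em_lift D Q C P Ko Ka \<kappa> \<mu> \<nu> Xo Xa x \<xi> Zo Za z \<longrightarrow>
              same_one_arrow D Q Xo' Xa' x' Zo Za z)))
    \<and> (\<forall>Xo Xa x \<xi> Yo Ya y \<zeta> Xo' Xa' x' Yo' Ya' y' \<gamma>.
         em_cone D Q C P Ko Ka \<kappa> \<mu> \<nu> Xo Xa x \<xi> \<and>
         em_cone D Q C P Ko Ka \<kappa> \<mu> \<nu> Yo Ya y \<zeta> \<and>
         em_lift D Q C P Ko Ka \<kappa> \<mu> \<nu> Xo Xa x \<xi> Xo' Xa' x' \<and>
         em_lift D Q C P Ko Ka \<kappa> \<mu> \<nu> Yo Ya y \<zeta> Yo' Ya' y' \<and>
         two_arrow D Q C P Xo Xa x Yo Ya y \<gamma> \<and>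
         (\<forall>E\<in>Obj D. cmp C (\<zeta> E) (\<gamma> E) = cmp C (Ka (\<gamma> E)) (\<xi> E)) \<longrightarrow>
         (\<exists>\<gamma>'. two_arrow D Q (coalg_cat C Ko Ka \<mu> \<nu>) (coalg_doct P \<kappa>)
                  Xo' Xa' x' Yo' Ya' y' \<gamma>' \<and>
               (\<forall>E\<in>Obj D. \<gamma>' E = \<gamma> E) \<and>
               (\<forall>\<gamma>''. two_arrow D Q (coalg_cat C Ko Ka \<mu> \<nu>) (coalg_doct P \<kappa>)
                        Xo' Xa' x' Yo' Ya' y' \<gamma>'' \<and> (\<forall>E\<in>Obj D. \<gamma>'' E = \<gamma> E) \<longrightarrow>
                      (\<forall>E\<in>Obj D. \<gamma>'' E = \<gamma>' E))))"
proof (intro conjI allI impI)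
  have K: "one_arrow C P C P Ko Ka \<kappa>" using comonad unfolding comonad_on_def by blast
  show "em_cone (coalg_cat C Ko Ka \<mu> \<nu>) (coalg_doct P \<kappa>) C P Ko Ka \<kappa> \<mu> \<nu>
      fst id (\<lambda>A \<alpha>. \<alpha>) snd"
    using K by (rule em_cone_forget)
  fix Xo Xa x \<xi> assume "em_cone D Q C P Ko Ka \<kappa> \<mu> \<nu> Xo Xa x \<xi>"
  then have lift: "em_lift D Q C P Ko Ka \<kappa> \<mu> \<nu> Xo Xa x \<xi> (\<lambda>E. (Xo E, \<xi> E)) Xa x"
    by (rule em_lift_exists[OF K])
  show "\<exists>Xo' Xa' x'. em_lift D Q C P Ko Ka \<kappa> \<mu> \<nu> Xo Xa x \<xi> Xo' Xa' x' \<and>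
      (\<forall>Zo Za z. em_lift D Q C P Ko Ka \<kappa> \<mu> \<nu> Xo Xa x \<xi> Zo Za z \<longrightarrow>
         same_one_arrow D Q Xo' Xa' x' Zo Za z)"
    using lift em_lift_unique[OF lift] by blast
next
  fix Xo Xa x \<xi> Yo Ya y \<zeta> Xo' Xa' x' Yo' Ya' y' \<gamma>
  assume "em_cone D Q C P Ko Ka \<kappa> \<mu> \<nu> Xo Xa x \<xi> \<and>
    em_cone D Q C P Ko Ka \<kappa> \<mu> \<nu> Yo Ya y \<zeta> \<and>
    em_lift D Q C P Ko Ka \<kappa> \<mu> \<nu> Xo Xa x \<xi> Xo' Xa' x' \<and>
    em_lift D Q C P Ko Ka \<kappa> \<mu> \<nu> Yo Ya y \<zeta> Yo' Ya' y' \<and>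
    two_arrow D Q C P Xo Xa x Yo Ya y \<gamma> \<and>
    (\<forall>E\<in>Obj D. cmp C (\<zeta> E) (\<gamma> E) = cmp C (Ka (\<gamma> E)) (\<xi> E))"
  then have "two_arrow D Q (coalg_cat C Ko Ka \<mu> \<nu>) (coalg_doct P \<kappa>) Xo' Xa' x' Yo' Ya' y' \<gamma>"
    by (elim conjE) (rule two_arrow_em_lift)
  then show "\<exists>\<gamma>'. two_arrow D Q (coalg_cat C Ko Ka \<mu> \<nu>) (coalg_doct P \<kappa>)
      Xo' Xa' x' Yo' Ya' y' \<gamma>' \<and> (\<forall>E\<in>Obj D. \<gamma>' E = \<gamma> E) \<and>
      (\<forall>\<gamma>''. two_arrow D Q (coalg_cat C Ko Ka \<mu> \<nu>) (coalg_doct P \<kappa>)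
          Xo' Xa' x' Yo' Ya' y' \<gamma>'' \<and> (\<forall>E\<in>Obj D. \<gamma>'' E = \<gamma> E) \<longrightarrow>
        (\<forall>E\<in>Obj D. \<gamma>'' E = \<gamma>' E))"
    by blast
qed

end
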